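(* For every formula $A$ of $\mathbf{L_1}$, if $\vdash_T A$ then $\vdash_H A$.
   Context: Formulas of $\mathbf{L_1}$: built from atomic formulas $\epsilon ab$ ($a,b$ name variables, possibly equal) with primitive connectives $\vee,\sim$; $\wedge,\supset,\equiv$ defined as usual. $\vdash_H A$: $A$ belongs to the smallest set of formulas containing all instances of classical propositional tautologies and all formulas $\epsilon ab\supset\epsilon aa$, $(\epsilon ab\wedge\epsilon bc)\supset\epsilon ac$, $(\epsilon ab\wedge\epsilon bb)\supset\epsilon ba$, closed under modus ponens. Positive/negative parts (occurrences): $A$ is a positive part of $A$; if $B\vee C$ is a positive part then $B,C$ are positive parts; if $\sim B$ is a positive part then $B$ is a negative part; if $\sim B$ is a negative part then $B$ is a positive part. $F[B_+]$ ($G[B_-]$) denotes a formula with a specified occurrence of $B$ as positive (negative) part; $F[B_+,C_-]$ etc. denote specified non-overlapping occurrences. Tableaux: reduction rules ($\vee_-$) $G[B\vee C_-]$ $\mapsto$ two branches $G[B\vee C_-]\vee\sim B$, $G[B\vee C_-]\vee\sim C$; ($\epsilon_1$) $G[\epsilon ab_-]\mapsto G[\epsilon ab_-]\vee\sim\epsilon aa$; ($\epsilon_2$) $G[\epsilon ab_-,\epsilon bc_-]\mapsto G[\epsilon ab_-,\epsilon bc_-]\vee\sim\epsilon ac$; ($\epsilon_{3b}$) $G[\epsilon ab_-,\epsilon bb_-]\mapsto G[\epsilon ab_-,\epsilon bb_-]\vee\sim\epsilon ba$. A tableau for $A$ is a finite tree with root $A$ whose non-leaf nodes have as children the result of applying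 one rule. A branch is closed if its last formula has the form $F[B_+,B_-]$; a tableau is closed if all its branches are closed. $\vdash_T A$: $A$ has a closed tableau. *)

theory Defs
  imports Main
begin

type_synonym name = nat

datatype fm = Eps name name | Or fm fm | Neg fm

definition And :: "fm \<Rightarrow> fm \<Rightarrow> fm" where "And A B = Neg (Or (Neg A) (Neg B))"
definition Imp :: "fm \<Rightarrow> fm \<Rightarrow> fm" where "Imp A B = Or (Neg A) B"
definition Iff :: "fm \<Rightarrow> fm \<Rightarrow> fm" where "Iff A B = And (Imp A B) (Imp B A)"

datatype pform = PVar nat | POr pform pform | PNeg pform

primrec peval :: "(nat \<Rightarrow> bool) \<Rightarrow> pform \<Rightarrow> bool" where
  "peval v (PVar n) = v n"
| "peval v (POr P Q) = (peval v P \<or> peval v Q)"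
| "peval v (PNeg P) = (\<not> peval v P)"

definition ptaut :: "pform \<Rightarrow> bool" where "ptaut P \<longleftrightarrow> (\<forall>v. peval v P)"

primrec psubst :: "(nat \<Rightarrow> fm) \<Rightarrow> pform \<Rightarrow> fm" where
  "psubst s (PVar n) = s n"
| "psubst s (POr P Q) = Or (psubst s P) (psubst s Q)"
| "psubst s (PNeg P) = Neg (psubst s P)"

definition taut_instance :: "fm \<Rightarrow> bool" where
  "taut_instance A \<longleftrightarrow> (\<exists>P s. ptaut P \<and> A = psubst s P)"

inductive H_prov :: "fm \<Rightarrow> bool" where
  taut: "taut_instance A \<Longrightarrow> H_prov A"
| ax1: "H_prov (Imp (Eps a b) (Eps a a))"
| ax2: "H_prov (Imp (And (Eps a b) (Eps b c)) (Eps a c))"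
| ax3: "H_prov (Imp (And (Eps a b) (Eps b b)) (Eps b a))"
| mp: "H_prov (Imp A B) \<Longrightarrow> H_prov A \<Longrightarrow> H_prov B"

text \<open>part A p B s: the subformula occurrence of A at path p is B, and it is a
  positive part (s = True) or negative part (s = False) of A.\<close>

inductive part :: "fm \<Rightarrow> nat list \<Rightarrow> fm \<Rightarrow> bool \<Rightarrow> bool" where
  root: "part A [] A True"
| or_l: "part A p (Or B C) True \<Longrightarrow> part A (p @ [0]) B True"
| or_r: "part A p (Or B C) True \<Longrightarrow> part A (p @ [1]) C True"
| neg: "part A p (Neg B) s \<Longrightarrow> part A (p @ [0]) B (\<not> s)"

definition non_overlap :: "nat list \<Rightarrow> nat list \<Rightarrow> bool" where
  "non_overlap p q \<longleftrightarrow> (\<nexists>r. q = p @ r) \<and> (\<nexists>r. p = q @ r)"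

inductive rule_app :: "fm \<Rightarrow> fm list \<Rightarrow> bool" where
  or_neg: "part G p (Or B C) False \<Longrightarrow>
     rule_app G [Or G (Neg B), Or G (Neg C)]"
| eps1: "part G p (Eps a b) False \<Longrightarrow> rule_app G [Or G (Neg (Eps a a))]"
| eps2: "part G p (Eps a b) False \<Longrightarrow> part G q (Eps b c) False \<Longrightarrow> non_overlap p q \<Longrightarrow>
     rule_app G [Or G (Neg (Eps a c))]"
| eps3b: "part G p (Eps a b) False \<Longrightarrow> part G q (Eps b b) False \<Longrightarrow> non_overlap p q \<Longrightarrow>
     rule_app G [Or G (Neg (Eps b a))]"

definition closed_fm :: "fm \<Rightarrow> bool" where
  "closed_fm F \<longleftrightarrow> (\<exists>p q B. part F p B True \<and> part F q B False \<and> non_overlap p q)"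

datatype tab = Node fm "tab list"

primrec root_of :: "tab \<Rightarrow> fm" where "root_of (Node A ts) = A"

inductive is_tableau :: "tab \<Rightarrow> bool" where
  leaf: "is_tableau (Node A [])"
| step: "rule_app A (map root_of ts) \<Longrightarrow> (\<forall>t\<in>set ts. is_tableau t) \<Longrightarrow> is_tableau (Node A ts)"

inductive all_closed :: "tab \<Rightarrow> bool" where
  leaf: "closed_fm A \<Longrightarrow> all_closed (Node A [])"
| inner: "ts \<noteq> [] \<Longrightarrow> (\<forall>t\<in>set ts. all_closed t) \<Longrightarrow> all_closed (Node A ts)"

definition T_prov :: "fm \<Rightarrow> bool" where
  "T_prov A \<longleftrightarrow> (\<exists>t. is_tableau t \<and> root_of t = A \<and> all_closed t)"

end

theory Submission
  imports Defs "HOL-Library.Nat_Bijection"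
begin

text \<open>Under any valuation of the atoms, a formula is true as soon as one of its positive
  parts is true or one of its negative parts is false. So a closed formula \<open>F[B\<^sub>+, B\<^sub>-]\<close>
  is an instance of a tautology, and a formula \<open>G\<close> to which a rule applies is true whenever
  its children \<open>G \<or> \<not>D\<close> are, together with the axiom matching the rule (which makes \<open>D\<close>
  true once the parts of \<open>G\<close> it mentions are). Induction over the closed tableau then carries
  \<open>H\<close>-provability from the leaves to the root.\<close>

primrec fm_eval :: "(name \<Rightarrow> name \<Rightarrow> bool) \<Rightarrow> fm \<Rightarrow> bool" where
  "fm_eval w (Eps a b) = w a b"
| "fm_eval w (Or A B) = (fm_eval w A \<or> fm_eval w B)"
| "fm_eval w (Neg A) = (\<not> fm_eval w A)"

primrec fm_to_pform :: "fm \<Rightarrow> pform" where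
  "fm_to_pform (Eps a b) = PVar (prod_encode (a, b))"
| "fm_to_pform (Or A B) = POr (fm_to_pform A) (fm_to_pform B)"
| "fm_to_pform (Neg A) = PNeg (fm_to_pform A)"

definition atom_of_var :: "nat \<Rightarrow> fm" where
  "atom_of_var n = (case prod_decode n of (a, b) \<Rightarrow> Eps a b)"

lemma psubst_fm_to_pform: "psubst atom_of_var (fm_to_pform F) = F"
  by (induction F) (auto simp: atom_of_var_def)

lemma peval_fm_to_pform: "peval v (fm_to_pform F) = fm_eval (\<lambda>a b. v (prod_encode (a, b))) F"
  by (induction F) auto

lemma H_prov_if_valid:
  assumes "\<And>w. fm_eval w F"
  shows "H_prov F"
proof -
  have "ptaut (fm_to_pform F)"
    using assms by (simp add: ptaut_def peval_fm_to_pform)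
  then have "taut_instance F"
    unfolding taut_instance_def by (metis psubst_fm_to_pform)
  then show ?thesis by (rule H_prov.taut)
qed

lemma H_prov_consequence:
  assumes "H_prov X" and "H_prov Y"
    and "\<And>w. fm_eval w X \<Longrightarrow> fm_eval w Y \<Longrightarrow> fm_eval w G"
  shows "H_prov G"
proof -
  have "H_prov (Imp X (Imp Y G))"
    by (rule H_prov_if_valid) (use assms(3) in \<open>auto simp: Imp_def\<close>)
  then show ?thesis
    using assms(1,2) by (meson H_prov.mp)
qed

lemma part_eval:
  "part F p B s \<Longrightarrow> (if s then fm_eval w B \<longrightarrow> fm_eval w F else \<not> fm_eval w B \<longrightarrow> fm_eval w F)"
  by (induction rule: part.induct) auto

lemma part_pos_eval: "part F p B True \<Longrightarrow> fm_eval w B \<Longrightarrow> fm_eval w F"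
  using part_eval[of F p B True w] by simp

lemma part_neg_eval: "part F p B False \<Longrightarrow> \<not> fm_eval w B \<Longrightarrow> fm_eval w F"
  using part_eval[of F p B False w] by simp

lemma H_prov_closed_fm: "closed_fm F \<Longrightarrow> H_prov F"
  unfolding closed_fm_def by (metis H_prov_if_valid part_pos_eval part_neg_eval)

lemma H_prov_rule_app:
  "rule_app G Gs \<Longrightarrow> \<forall>X\<in>set Gs. H_prov X \<Longrightarrow> H_prov G"
proof (induction rule: rule_app.induct)
  case (or_neg G p B C)
  have sem: "fm_eval w G" if "fm_eval w (Or G (Neg B))" "fm_eval w (Or G (Neg C))" for w
    using that part_neg_eval[OF or_neg(1), of w] by auto
  show ?case
    using or_neg(2) by (auto intro: H_prov_consequence[OF _ _ sem])
next
  case (eps1 G p a b)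
  have sem: "fm_eval w G"
    if "fm_eval w (Imp (Eps a b) (Eps a a))" "fm_eval w (Or G (Neg (Eps a a)))" for w
    using that part_neg_eval[OF eps1(1), of w] by (auto simp: Imp_def)
  show ?case
    using eps1(2) by (auto intro: H_prov_consequence[OF H_prov.ax1 _ sem])
next
  case (eps2 G p a b q c)
  have sem: "fm_eval w G"
    if "fm_eval w (Imp (And (Eps a b) (Eps b c)) (Eps a c))" "fm_eval w (Or G (Neg (Eps a c)))" for w
    using that part_neg_eval[OF eps2(1), of w] part_neg_eval[OF eps2(2), of w]
    by (auto simp: Imp_def And_def)
  show ?case
    using eps2(4) by (auto intro: H_prov_consequence[OF H_prov.ax2 _ sem])
next
  case (eps3b G p a b q)
  have sem: "fm_eval w G"
    if "fm_eval w (Imp (And (Eps a b) (Eps b b)) (Eps b a))" "fm_eval w (Or G (Neg (Eps b a)))" for w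
    using that part_neg_eval[OF eps3b(1), of w] part_neg_eval[OF eps3b(2), of w]
    by (auto simp: Imp_def And_def)
  show ?case
    using eps3b(4) by (auto intro: H_prov_consequence[OF H_prov.ax3 _ sem])
qed

lemma H_prov_root_of_closed_tableau:
  "all_closed t \<Longrightarrow> is_tableau t \<Longrightarrow> H_prov (root_of t)"
proof (induction rule: all_closed.induct)
  case (leaf A)
  then show ?case by (simp add: H_prov_closed_fm)
next
  case (inner ts A)
  then have rule: "rule_app A (map root_of ts)" and "\<forall>t\<in>set ts. is_tableau t"
    by (auto elim: is_tableau.cases)
  with inner.IH have "\<forall>X\<in>set (map root_of ts). H_prov X"
    by auto
  with rule have "H_prov A"
    by (rule H_prov_rule_app)
  then show ?case
    by simp
qed

theorem theorem2p2:
  fixes A :: fm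
  assumes "T_prov A"
  shows "H_prov A"
  using assms H_prov_root_of_closed_tableau unfolding T_prov_def by blast

end
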